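(* If $\mathbb W=(W,I,\preccurlyeq,\circ,{}^\sim,{}^-)$ is a DInFL-frame, then $\mathbb W\cong(\mathbb W^+)_+$ as first-order structures; more precisely, the map $x\mapsto{\uparrow}x=\{y\in W\mid x\preccurlyeq y\}$ is a bijection from $W$ onto $J^\infty(\mathbb W^+)$ such that $x\preccurlyeq y$ iff ${\uparrow}x\supseteq{\uparrow}y$, $x\in I$ iff ${\uparrow}x\subseteq I$, $z\in x\circ y$ iff ${\uparrow}z\subseteq{\uparrow}x\circ{\uparrow}y$, and ${\uparrow}(x^\sim)=({\uparrow}x)^\sim$, ${\uparrow}(x^-)=({\uparrow}x)^-$ (the latter operations being those of $(\mathbb W^+)_+$).
   Context: For a set $W$ and $\circ:W\times W\to\mathcal P(W)$, $U\circ V=\bigcup\{a\circ b\mid a\in U,b\in V\}$, $x\circ V=\{x\}\circ V$, $U\circ y=U\circ\{y\}$; $x^{\sim-}$ means $(x^\sim)^-$. A DInFL-frame is a tuple $(W,I,\preccurlyeq,\circ,{}^\sim,{}^-)$ with $I\subseteq W$, $\preccurlyeq$ a partial order, $\circ:W\times W\to\mathcal P(W)$, ${}^\sim,{}^-:W\to W$, such that for all $u,v,x,y,z$: (F1) $x\preccurlyeq y$ iff $y\in I\circ x$ iff $y\in x\circ I$; (F2) $x\preccurlyeq y$, $x\in I$ imply $y\in I$; (F3) $x\preccurlyeq y$, $x\in u\circ v$ imply $y\in u\circ v$; (F4) $(x\circ y)\circ z=x\circ(y\circ z)$; (F5) $z^\sim\in x\circ y$ iff $y^-\in z\circ x$;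 (F6) $x^{\sim-}\preccurlyeq x$ and $x^{-\sim}\preccurlyeq x$. $\mathbb W^+=(\mathsf{Up}(W,\preccurlyeq),\cap,\cup,\circ,I,\sim,-)$ with ${\sim}U=\{w\mid w^-\notin U\}$, $-U=\{w\mid w^\sim\notin U\}$; it is a complete perfect DInFL-algebra. For a complete perfect DInFL-algebra $\mathbf A$ with completely join-irreducibles $J^\infty(\mathbf A)$ and $\kappa(j)=\bigvee\{a\mid j\not\leqslant a\}$, $\mathbf A_+=(J^\infty(\mathbf A),I_1,\preccurlyeq,\circ,{}^\sim,{}^-)$ with $I_1=\{i\in J^\infty(\mathbf A)\mid i\leqslant 1\}$, $a\preccurlyeq b$ iff $b\leqslant a$, $c\in a\circ b$ iff $c\leqslant a\cdot b$, $a^\sim={\sim}\kappa(a)$, $a^-=-\kappa(a)$. *)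

theory Defs
  imports Main
begin

text \<open>A DInFL-frame on a carrier set W: I is a subset of W, le a partial order on W,
  cmp : W x W -> P(W), tld (the operation x \<mapsto> x^~) and mns (x \<mapsto> x^-) maps W -> W.\<close>

definition lift :: "('a \<Rightarrow> 'a \<Rightarrow> 'a set) \<Rightarrow> 'a set \<Rightarrow> 'a set \<Rightarrow> 'a set" where
  "lift cmp U V = (\<Union>a\<in>U. \<Union>b\<in>V. cmp a b)"

definition dinfl_frame ::
  "'a set \<Rightarrow> 'a set \<Rightarrow> ('a \<Rightarrow> 'a \<Rightarrow> bool) \<Rightarrow> ('a \<Rightarrow> 'a \<Rightarrow> 'a set) \<Rightarrow> ('a \<Rightarrow> 'a) \<Rightarrow> ('a \<Rightarrow> 'a) \<Rightarrow> bool" where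
  "dinfl_frame W I le cmp tld mns \<longleftrightarrow>
     I \<subseteq> W \<and>
     (\<forall>x\<in>W. \<forall>y\<in>W. cmp x y \<subseteq> W) \<and>
     (\<forall>x\<in>W. tld x \<in> W \<and> mns x \<in> W) \<and>
     (\<forall>x\<in>W. le x x) \<and>
     (\<forall>x\<in>W. \<forall>y\<in>W. le x y \<and> le y x \<longrightarrow> x = y) \<and>
     (\<forall>x\<in>W. \<forall>y\<in>W. \<forall>z\<in>W. le x y \<and> le y z \<longrightarrow> le x z) \<and>
     \<comment> \<open>(F1)\<close>
     (\<forall>x\<in>W. \<forall>y\<in>W. (le x y \<longleftrightarrow> y \<in> lift cmp I {x}) \<and> (le x y \<longleftrightarrow> y \<in> lift cmp {x} I)) \<and>
     \<comment> \<open>(F2)\<close>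
     (\<forall>x\<in>W. \<forall>y\<in>W. le x y \<and> x \<in> I \<longrightarrow> y \<in> I) \<and>
     \<comment> \<open>(F3)\<close>
     (\<forall>u\<in>W. \<forall>v\<in>W. \<forall>x\<in>W. \<forall>y\<in>W. le x y \<and> x \<in> cmp u v \<longrightarrow> y \<in> cmp u v) \<and>
     \<comment> \<open>(F4)\<close>
     (\<forall>x\<in>W. \<forall>y\<in>W. \<forall>z\<in>W. lift cmp (cmp x y) {z} = lift cmp {x} (cmp y z)) \<and>
     \<comment> \<open>(F5)\<close>
     (\<forall>x\<in>W. \<forall>y\<in>W. \<forall>z\<in>W. tld z \<in> cmp x y \<longleftrightarrow> mns y \<in> cmp z x) \<and>
     \<comment> \<open>(F6)\<close>
     (\<forall>x\<in>W. le (mns (tld x)) x \<and> le (tld (mns x)) x)"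

definition up_set :: "'a set \<Rightarrow> ('a \<Rightarrow> 'a \<Rightarrow> bool) \<Rightarrow> 'a set \<Rightarrow> bool" where
  "up_set W le U \<longleftrightarrow> U \<subseteq> W \<and> (\<forall>x\<in>U. \<forall>y\<in>W. le x y \<longrightarrow> y \<in> U)"

definition upc :: "'a set \<Rightarrow> ('a \<Rightarrow> 'a \<Rightarrow> bool) \<Rightarrow> 'a \<Rightarrow> 'a set" where
  "upc W le x = {y\<in>W. le x y}"

text \<open>Operations of the complex algebra W^+ (order is inclusion, joins are unions).\<close>
definition neg_tl :: "'a set \<Rightarrow> ('a \<Rightarrow> 'a) \<Rightarrow> 'a set \<Rightarrow> 'a set" where
  "neg_tl W mns U = {w\<in>W. mns w \<notin> U}"

definition neg_mn :: "'a set \<Rightarrow> ('a \<Rightarrow> 'a) \<Rightarrow> 'a set \<Rightarrow> 'a set" where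
  "neg_mn W tld U = {w\<in>W. tld w \<notin> U}"

text \<open>Completely join-irreducible elements of Up(W, le): j = \<Squnion>S implies j \<in> S
  (for S = {} this excludes the bottom element).\<close>
definition Jinf :: "'a set \<Rightarrow> ('a \<Rightarrow> 'a \<Rightarrow> bool) \<Rightarrow> 'a set set" where
  "Jinf W le = {U. up_set W le U \<and>
      (\<forall>S. (\<forall>V\<in>S. up_set W le V) \<longrightarrow> U = \<Union>S \<longrightarrow> U \<in> S)}"

definition kappa :: "'a set \<Rightarrow> ('a \<Rightarrow> 'a \<Rightarrow> bool) \<Rightarrow> 'a set \<Rightarrow> 'a set" where
  "kappa W le j = \<Union>{a. up_set W le a \<and> \<not> j \<subseteq> a}"

text \<open>The components of the frame (W^+)_+.\<close>
definition dual_I :: "'a set \<Rightarrow> ('a \<Rightarrow> 'a \<Rightarrow> bool) \<Rightarrow> 'a set \<Rightarrow> 'a set set" where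
  "dual_I W le I = {i \<in> Jinf W le. i \<subseteq> I}"

definition dual_le :: "'a set \<Rightarrow> 'a set \<Rightarrow> bool" where
  "dual_le a b \<longleftrightarrow> b \<subseteq> a"

definition dual_comp :: "'a set \<Rightarrow> ('a \<Rightarrow> 'a \<Rightarrow> bool) \<Rightarrow> ('a \<Rightarrow> 'a \<Rightarrow> 'a set) \<Rightarrow> 'a set \<Rightarrow> 'a set \<Rightarrow> 'a set set" where
  "dual_comp W le cmp a b = {c \<in> Jinf W le. c \<subseteq> lift cmp a b}"

definition dual_tl :: "'a set \<Rightarrow> ('a \<Rightarrow> 'a \<Rightarrow> bool) \<Rightarrow> ('a \<Rightarrow> 'a) \<Rightarrow> 'a set \<Rightarrow> 'a set" where
  "dual_tl W le mns a = neg_tl W mns (kappa W le a)"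

definition dual_mn :: "'a set \<Rightarrow> ('a \<Rightarrow> 'a \<Rightarrow> bool) \<Rightarrow> ('a \<Rightarrow> 'a) \<Rightarrow> 'a set \<Rightarrow> 'a set" where
  "dual_mn W le tld a = neg_mn W tld (kappa W le a)"

end

theory Submission
  imports Defs
begin

text \<open>Every up-set is the union of the principal up-sets it contains, so the completely
  join-irreducible up-sets are exactly the principal ones \<open>\<up>x\<close>, and \<open>\<kappa>(\<up>x)\<close> is the
  complement of \<open>\<down>x\<close>. By (F1), (F3) and (F4) each \<open>x \<circ> y\<close> is an up-set that is antitone in
  both arguments, whence \<open>\<up>x \<circ> \<up>y = x \<circ> y\<close>. By (F1) and (F5), \<open>z \<preccurlyeq> w\<^sup>-\<close> iff \<open>w \<preccurlyeq> z\<^sup>\<sim>\<close>;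
  with (F6) this makes \<open>\<^sup>\<sim>\<close> and \<open>\<^sup>-\<close> mutually inverse, so that
  \<open>\<up>(x\<^sup>\<sim>) = {w. w\<^sup>- \<preccurlyeq> x} = \<sim>\<kappa>(\<up>x)\<close>, and dually for \<open>\<^sup>-\<close>.\<close>

lemma mem_lift_iff: "z \<in> lift cmp U V \<longleftrightarrow> (\<exists>a\<in>U. \<exists>b\<in>V. z \<in> cmp a b)"
  by (auto simp: lift_def)

locale preordered_set =
  fixes W :: "'a set" and le :: "'a \<Rightarrow> 'a \<Rightarrow> bool"
  assumes le_refl: "x \<in> W \<Longrightarrow> le x x"
    and le_trans: "x \<in> W \<Longrightarrow> y \<in> W \<Longrightarrow> z \<in> W \<Longrightarrow> le x y \<Longrightarrow> le y z \<Longrightarrow> le x z"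
begin

lemma self_mem_upc: "x \<in> W \<Longrightarrow> x \<in> upc W le x"
  by (simp add: upc_def le_refl)

lemma up_set_upc: "x \<in> W \<Longrightarrow> up_set W le (upc W le x)"
  by (auto simp: up_set_def upc_def intro: le_trans)

lemma upc_subset_iff_mem:
  assumes "up_set W le U" "x \<in> W"
  shows "upc W le x \<subseteq> U \<longleftrightarrow> x \<in> U"
  using assms self_mem_upc by (auto simp: up_set_def upc_def)

lemma upc_subset_upc_iff: "x \<in> W \<Longrightarrow> y \<in> W \<Longrightarrow> upc W le y \<subseteq> upc W le x \<longleftrightarrow> le x y"
  using upc_subset_iff_mem[OF up_set_upc, of x y] by (simp add: upc_def)

lemma up_set_eq_Union_upc:
  assumes "up_set W le U"
  shows "U = \<Union>(upc W le ` U)"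
proof
  from assms show "U \<subseteq> \<Union>(upc W le ` U)"
    using self_mem_upc by (auto simp: up_set_def)
  from assms show "\<Union>(upc W le ` U) \<subseteq> U"
    using upc_subset_iff_mem by (auto simp: up_set_def)
qed

lemma Jinf_eq_upc_image: "Jinf W le = upc W le ` W"
proof
  show "Jinf W le \<subseteq> upc W le ` W"
  proof
    fix U assume U: "U \<in> Jinf W le"
    then have up: "up_set W le U" by (simp add: Jinf_def)
    then have "\<forall>V\<in>upc W le ` U. up_set W le V"
      using up_set_upc by (auto simp: up_set_def)
    with U up_set_eq_Union_upc[OF up] have "U \<in> upc W le ` U"
      unfolding Jinf_def by blast
    with up show "U \<in> upc W le ` W" by (auto simp: up_set_def)
  qed
next
  show "upc W le ` W \<subseteq> Jinf W le"
  proof (clarsimp simp: Jinf_def up_set_upc)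
    fix x S assume x: "x \<in> W" and S: "\<forall>V\<in>S. up_set W le V" and eq: "upc W le x = \<Union>S"
    then obtain V where V: "V \<in> S" "x \<in> V" using self_mem_upc by blast
    with S x have "upc W le x \<subseteq> V" by (simp add: upc_subset_iff_mem)
    with V eq show "\<Union>S \<in> S" by (metis Union_upper subset_antisym)
  qed
qed

lemma kappa_upc:
  assumes x: "x \<in> W"
  shows "kappa W le (upc W le x) = {w \<in> W. \<not> le w x}"
proof (intro equalityI subsetI)
  fix w assume "w \<in> kappa W le (upc W le x)"
  then obtain U where U: "up_set W le U" "\<not> upc W le x \<subseteq> U" "w \<in> U"
    by (auto simp: kappa_def)
  then have "w \<in> W" by (auto simp: up_set_def)
  moreover have "\<not> le w x"
    using U x \<open>w \<in> W\<close> upc_subset_iff_mem by (auto simp: up_set_def)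
  ultimately show "w \<in> {w \<in> W. \<not> le w x}" by simp
next
  fix w assume "w \<in> {w \<in> W. \<not> le w x}"
  then show "w \<in> kappa W le (upc W le x)"
    unfolding kappa_def using x up_set_upc self_mem_upc upc_subset_upc_iff by blast
qed

lemma inj_on_upc:
  assumes "\<And>x y. x \<in> W \<Longrightarrow> y \<in> W \<Longrightarrow> le x y \<Longrightarrow> le y x \<Longrightarrow> x = y"
  shows "inj_on (upc W le) W"
proof (rule inj_onI)
  fix x y assume "x \<in> W" "y \<in> W" "upc W le x = upc W le y"
  then show "x = y" using assms upc_subset_upc_iff by (metis order_refl)
qed

end

locale dinfl =
  fixes W I :: "'a set" and le :: "'a \<Rightarrow> 'a \<Rightarrow> bool" and cmp :: "'a \<Rightarrow> 'a \<Rightarrow> 'a set"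
    and tld mns :: "'a \<Rightarrow> 'a"
  assumes I_subset: "I \<subseteq> W"
    and cmp_subset: "\<forall>x\<in>W. \<forall>y\<in>W. cmp x y \<subseteq> W"
    and neg_closed: "\<forall>x\<in>W. tld x \<in> W \<and> mns x \<in> W"
    and le_refl_on: "\<forall>x\<in>W. le x x"
    and le_antisym_on: "\<forall>x\<in>W. \<forall>y\<in>W. le x y \<and> le y x \<longrightarrow> x = y"
    and le_trans_on: "\<forall>x\<in>W. \<forall>y\<in>W. \<forall>z\<in>W. le x y \<and> le y z \<longrightarrow> le x z"
    and F1: "\<forall>x\<in>W. \<forall>y\<in>W. (le x y \<longleftrightarrow> y \<in> lift cmp I {x}) \<and> (le x y \<longleftrightarrow> y \<in> lift cmp {x} I)"
    and F2: "\<forall>x\<in>W. \<forall>y\<in>W. le x y \<and> x \<in> I \<longrightarrow> y \<in> I"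
    and F3: "\<forall>u\<in>W. \<forall>v\<in>W. \<forall>x\<in>W. \<forall>y\<in>W. le x y \<and> x \<in> cmp u v \<longrightarrow> y \<in> cmp u v"
    and F4: "\<forall>x\<in>W. \<forall>y\<in>W. \<forall>z\<in>W. lift cmp (cmp x y) {z} = lift cmp {x} (cmp y z)"
    and F5: "\<forall>x\<in>W. \<forall>y\<in>W. \<forall>z\<in>W. tld z \<in> cmp x y \<longleftrightarrow> mns y \<in> cmp z x"
    and F6: "\<forall>x\<in>W. le (mns (tld x)) x \<and> le (tld (mns x)) x"

lemma dinfl_frame_imp_dinfl: "dinfl_frame W I le cmp tld mns \<Longrightarrow> dinfl W I le cmp tld mns"
  unfolding dinfl_frame_def dinfl_def conj_assoc .

context dinfl
begin

sublocale preordered_set W le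
  using le_refl_on le_trans_on by unfold_locales blast+

lemma le_antisym: "x \<in> W \<Longrightarrow> y \<in> W \<Longrightarrow> le x y \<Longrightarrow> le y x \<Longrightarrow> x = y"
  using le_antisym_on by blast

lemma cmp_closed: "x \<in> W \<Longrightarrow> y \<in> W \<Longrightarrow> cmp x y \<subseteq> W"
  using cmp_subset by blast

lemma tld_closed: "x \<in> W \<Longrightarrow> tld x \<in> W"
  using neg_closed by blast

lemma mns_closed: "x \<in> W \<Longrightarrow> mns x \<in> W"
  using neg_closed by blast

lemma le_iff_in_cmp_left: "x \<in> W \<Longrightarrow> y \<in> W \<Longrightarrow> le x y \<longleftrightarrow> (\<exists>i\<in>I. y \<in> cmp i x)"
  using F1 by (simp add: mem_lift_iff)

lemma le_iff_in_cmp_right: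
  assumes "x \<in> W" "y \<in> W"
  shows "le x y \<longleftrightarrow> (\<exists>i\<in>I. y \<in> cmp x i)"
  using conjunct2[OF F1[rule_format, OF assms]] by (simp add: mem_lift_iff)

lemma up_set_I: "up_set W le I"
  unfolding up_set_def using I_subset F2 by blast

lemma up_set_cmp: "x \<in> W \<Longrightarrow> y \<in> W \<Longrightarrow> up_set W le (cmp x y)"
  unfolding up_set_def using cmp_closed F3 by blast

lemma cmp_up_closed:
  "x \<in> W \<Longrightarrow> y \<in> W \<Longrightarrow> z \<in> W \<Longrightarrow> z' \<in> W \<Longrightarrow> z \<in> cmp x y \<Longrightarrow> le z z' \<Longrightarrow> z' \<in> cmp x y"
  using up_set_cmp by (auto simp: up_set_def)

text \<open>Write \<open>b \<in> y \<circ> i\<close> with \<open>i \<in> I\<close> by (F1) and reassociate by (F4):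
  \<open>a \<circ> b \<subseteq> (a \<circ> y) \<circ> i\<close>, and \<open>w \<circ> i \<subseteq> \<up>w\<close> by (F1).\<close>

lemma cmp_antimono_right:
  assumes "a \<in> W" "y \<in> W" "b \<in> W" "le y b"
  shows "cmp a b \<subseteq> cmp a y"
proof
  fix z assume z: "z \<in> cmp a b"
  obtain i where i: "i \<in> I" "b \<in> cmp y i" "i \<in> W"
    using assms le_iff_in_cmp_right I_subset by blast
  have "z \<in> lift cmp {a} (cmp y i)" using z i by (auto simp: mem_lift_iff)
  then have "z \<in> lift cmp (cmp a y) {i}" using F4 assms i by simp
  then obtain w where w: "w \<in> cmp a y" "z \<in> cmp w i" by (auto simp: mem_lift_iff)
  have "w \<in> W" "z \<in> W" using w i assms cmp_closed by blast+
  with w i have "le w z" using le_iff_in_cmp_right by blast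
  with w assms \<open>w \<in> W\<close> \<open>z \<in> W\<close> show "z \<in> cmp a y" using cmp_up_closed by blast
qed

lemma cmp_antimono_left:
  assumes "a \<in> W" "y \<in> W" "x \<in> W" "le x a"
  shows "cmp a y \<subseteq> cmp x y"
proof
  fix z assume z: "z \<in> cmp a y"
  obtain i where i: "i \<in> I" "a \<in> cmp i x" "i \<in> W"
    using assms le_iff_in_cmp_left I_subset by blast
  have "z \<in> lift cmp (cmp i x) {y}" using z i by (auto simp: mem_lift_iff)
  then have "z \<in> lift cmp {i} (cmp x y)" using F4 assms i by simp
  then obtain w where w: "w \<in> cmp x y" "z \<in> cmp i w" by (auto simp: mem_lift_iff)
  have "w \<in> W" "z \<in> W" using w i assms cmp_closed by blast+
  with w i have "le w z" using le_iff_in_cmp_left by blast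
  with w assms \<open>w \<in> W\<close> \<open>z \<in> W\<close> show "z \<in> cmp x y" using cmp_up_closed by blast
qed

lemma lift_cmp_upc:
  assumes x: "x \<in> W" and y: "y \<in> W"
  shows "lift cmp (upc W le x) (upc W le y) = cmp x y"
proof
  show "lift cmp (upc W le x) (upc W le y) \<subseteq> cmp x y"
  proof
    fix z assume "z \<in> lift cmp (upc W le x) (upc W le y)"
    then obtain a b where a: "a \<in> W" "le x a" and b: "b \<in> W" "le y b" and z: "z \<in> cmp a b"
      by (auto simp: mem_lift_iff upc_def)
    have "cmp a b \<subseteq> cmp a y" using cmp_antimono_right a b y by blast
    also have "\<dots> \<subseteq> cmp x y" using cmp_antimono_left a x y by blast
    finally show "z \<in> cmp x y" using z by blast
  qed
  show "cmp x y \<subseteq> lift cmp (upc W le x) (upc W le y)"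
    using self_mem_upc[OF x] self_mem_upc[OF y] unfolding lift_def by blast
qed

lemma le_mns_iff_le_tld:
  assumes "z \<in> W" "w \<in> W"
  shows "le z (mns w) \<longleftrightarrow> le w (tld z)"
proof -
  have "le z (mns w) \<longleftrightarrow> (\<exists>i\<in>I. mns w \<in> cmp z i)"
    using assms mns_closed le_iff_in_cmp_right by blast
  also have "\<dots> \<longleftrightarrow> (\<exists>i\<in>I. tld z \<in> cmp i w)"
    using assms I_subset F5 by blast
  also have "\<dots> \<longleftrightarrow> le w (tld z)"
    using assms tld_closed le_iff_in_cmp_left by blast
  finally show ?thesis .
qed

lemma mns_tld: "x \<in> W \<Longrightarrow> mns (tld x) = x"
  using le_mns_iff_le_tld[of x "tld x"] F6 le_antisym le_refl tld_closed mns_closed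
  by simp

lemma tld_mns: "x \<in> W \<Longrightarrow> tld (mns x) = x"
  using le_mns_iff_le_tld[of "mns x" x] F6 le_antisym le_refl tld_closed mns_closed
  by simp

lemma tld_le_iff: "x \<in> W \<Longrightarrow> w \<in> W \<Longrightarrow> le (tld x) w \<longleftrightarrow> le (mns w) x"
  using le_mns_iff_le_tld[of "mns w" "tld x"] mns_tld tld_mns mns_closed tld_closed by simp

lemma mns_le_iff: "x \<in> W \<Longrightarrow> w \<in> W \<Longrightarrow> le (mns x) w \<longleftrightarrow> le (tld w) x"
  using le_mns_iff_le_tld[of "mns x" "tld w"] mns_tld tld_mns mns_closed tld_closed by simp

lemma upc_tld: "x \<in> W \<Longrightarrow> upc W le (tld x) = dual_tl W le mns (upc W le x)"
  by (simp add: dual_tl_def neg_tl_def kappa_upc) (auto simp: upc_def tld_le_iff mns_closed tld_closed)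

lemma upc_mns: "x \<in> W \<Longrightarrow> upc W le (mns x) = dual_mn W le tld (upc W le x)"
  by (simp add: dual_mn_def neg_mn_def kappa_upc) (auto simp: upc_def mns_le_iff tld_closed mns_closed)

end

theorem mainTheorem7:
  assumes "dinfl_frame W I le cmp tld mns"
  shows "bij_betw (upc W le) W (Jinf W le) \<and>
    (\<forall>x\<in>W. \<forall>y\<in>W. le x y \<longleftrightarrow> dual_le (upc W le x) (upc W le y)) \<and>
    (\<forall>x\<in>W. x \<in> I \<longleftrightarrow> upc W le x \<in> dual_I W le I) \<and>
    (\<forall>x\<in>W. \<forall>y\<in>W. \<forall>z\<in>W. z \<in> cmp x y \<longleftrightarrow>
        upc W le z \<in> dual_comp W le cmp (upc W le x) (upc W le y)) \<and>
    (\<forall>x\<in>W. upc W le (tld x) = dual_tl W le mns (upc W le x)) \<and>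
    (\<forall>x\<in>W. upc W le (mns x) = dual_mn W le tld (upc W le x))"
proof -
  interpret dinfl W I le cmp tld mns
    using assms by (rule dinfl_frame_imp_dinfl)
  have "bij_betw (upc W le) W (Jinf W le)"
    by (simp add: bij_betw_def Jinf_eq_upc_image inj_on_upc le_antisym)
  moreover have "\<forall>x\<in>W. \<forall>y\<in>W. le x y \<longleftrightarrow> dual_le (upc W le x) (upc W le y)"
    by (simp add: dual_le_def upc_subset_upc_iff)
  moreover have "\<forall>x\<in>W. x \<in> I \<longleftrightarrow> upc W le x \<in> dual_I W le I"
    by (simp add: dual_I_def Jinf_eq_upc_image upc_subset_iff_mem up_set_I)
  moreover have "\<forall>x\<in>W. \<forall>y\<in>W. \<forall>z\<in>W. z \<in> cmp x y \<longleftrightarrow>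
      upc W le z \<in> dual_comp W le cmp (upc W le x) (upc W le y)"
    by (simp add: dual_comp_def Jinf_eq_upc_image lift_cmp_upc upc_subset_iff_mem up_set_cmp)
  ultimately show ?thesis
    using upc_tld upc_mns by blast
qed

end
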